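(* Let $\Gamma$ be the first Grigorchuk group with generators $a,b,c,d$, acting on the right on $\{0,1\}^{\mathbb N}$, and let $\rho=111\cdots$. For a word $w=w_1\cdots w_n$ over $\{a,b,c,d\}$ set $\delta(w)=\#\{\rho\,w_{i+1}\cdots w_n: i=0,\dots,n\}$. Let $\eta$ be the real root of $t^3+t^2+t-2$ and $\alpha=\log 2/\log(2/\eta)$. There exist constants $C_1,C_2>0$ such that for every positive integer $\ell$: (1) every word $w$ over $\{a,b,c,d\}$ of length $\ell$ satisfies $\delta(w)\le C_1\ell^\alpha$; (2) there exists a word $w$ over $\{a,b,c,d\}$ of length $\ell$ with $\delta(w)\ge C_2\ell^\alpha$.
   Context: The first Grigorchuk group $\Gamma$ is the group of permutations of $\{0,1\}^{\mathbb N}$ (acting on the right) generated by $a,b,c,d$, defined recursively for $x\in\{0,1\}$ and infinite binary sequences $u$ by: $(xu)a=(1-x)u$; $(0u)b=0(ua)$, $(1u)b=1(uc)$; $(0u)c=0(ua)$, $(1u)c=1(ud)$; $(0u)d=0u$, $(1u)d=1(ub)$. *)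

theory Defs
  imports "HOL-Analysis.Analysis"
begin

datatype gen = A | B | C | D

text \<open>Infinite binary sequences u : nat => bool, with True for the letter 1 and False for 0.
  gact g u is the image (u)g; its n-th letter is computed by recursion on n.\<close>

fun gact :: "gen \<Rightarrow> (nat \<Rightarrow> bool) \<Rightarrow> nat \<Rightarrow> bool" where
  "gact A u n = (if n = 0 then \<not> u 0 else u n)"
| "gact B u 0 = u 0"
| "gact B u (Suc n) = (if u 0 then gact C (u \<circ> Suc) n else gact A (u \<circ> Suc) n)"
| "gact C u 0 = u 0"
| "gact C u (Suc n) = (if u 0 then gact D (u \<circ> Suc) n else gact A (u \<circ> Suc) n)"
| "gact D u 0 = u 0"
| "gact D u (Suc n) = (if u 0 then gact B (u \<circ> Suc) n else u (Suc n))"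

definition word_act :: "(nat \<Rightarrow> bool) \<Rightarrow> gen list \<Rightarrow> (nat \<Rightarrow> bool)" where
  "word_act u w = foldl (\<lambda>v g. gact g v) u w"

definition rho :: "nat \<Rightarrow> bool" where
  "rho = (\<lambda>_. True)"

definition delta :: "gen list \<Rightarrow> nat" where
  "delta w = card {word_act rho (drop i w) | i. i \<le> length w}"

end

theory Submission
  imports Defs
begin

text \<open>The letters b, c, d fix \<rho>, so only the letters a create new points, and two
  adjacent letters from b, c, d may be multiplied out without losing points; hence one may assume
  that every second letter of w is a. The points of w split according to their first letter into
  the points of the two sections of w, so \<delta>(w) \<le> \<delta>(w|0) + \<delta>(w|1). For a suitable weight
  |.| with |a| = 1 the two sections of an alternating word have total weight at most
  \<eta>(|w| + 1); iterating k times gives \<delta>(w) \<le> 2^(k+1) + \<eta>^k |w|, and choosing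
  k \<approx> log_(2/\<eta>) \<ell> yields \<delta>(w) = O(\<ell>^\<alpha>).

  Under the substitution b \<mapsto> bdc, c \<mapsto> bb, d \<mapsto> cc the word
  a y_1 a y_2 \<dots> a y_n a becomes a word both of whose sections act like the original word (up to
  a factor c), so the number of points doubles, while a weighted length grows by the factor 2/\<eta>.\<close>

definition prepend :: "bool \<Rightarrow> (nat \<Rightarrow> bool) \<Rightarrow> nat \<Rightarrow> bool" where
  "prepend x u = (\<lambda>n. case n of 0 \<Rightarrow> x | Suc m \<Rightarrow> u m)"

lemma prepend_0 [simp]: "prepend x u 0 = x"
  and prepend_Suc [simp]: "prepend x u (Suc n) = u n"
  and prepend_comp_Suc [simp]: "prepend x u \<circ> Suc = u"
  by (auto simp: prepend_def)

lemma prepend_head_tail: "prepend (u 0) (u \<circ> Suc) = u"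
  by (auto simp: prepend_def fun_eq_iff split: nat.split)

lemma prepend_eq_iff [simp]: "prepend x u = prepend y v \<longleftrightarrow> x = y \<and> u = v"
proof
  assume "prepend x u = prepend y v"
  then have "prepend x u 0 = prepend y v 0" "prepend x u \<circ> Suc = prepend y v \<circ> Suc" by simp_all
  then show "x = y \<and> u = v" by simp
qed simp

lemma word_act_Nil [simp]: "word_act u [] = u"
  and word_act_Cons [simp]: "word_act u (g # s) = word_act (gact g u) s"
  and word_act_append [simp]: "word_act u (s @ t) = word_act (word_act u s) t"
  by (simp_all add: word_act_def)

fun gen_section :: "gen \<Rightarrow> bool \<Rightarrow> gen list" where
  "gen_section A x = []"
| "gen_section B x = (if x then [C] else [A])"
| "gen_section C x = (if x then [D] else [A])"
| "gen_section D x = (if x then [B] else [])"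

fun word_section :: "bool \<Rightarrow> gen list \<Rightarrow> gen list" where
  "word_section x [] = []"
| "word_section x (g # s) = gen_section g x @ word_section (if g = A then \<not> x else x) s"

lemma gact_prepend:
  "gact g (prepend x u) = prepend (if g = A then \<not> x else x) (word_act u (gen_section g x))"
proof
  fix n
  show "gact g (prepend x u) n = prepend (if g = A then \<not> x else x) (word_act u (gen_section g x)) n"
    by (cases n; cases g) auto
qed

lemma word_act_prepend:
  "word_act (prepend x u) s = prepend (x \<noteq> odd (count_list s A)) (word_act u (word_section x s))"
  by (induction s arbitrary: x u) (auto simp: gact_prepend)

lemma word_section_append:
  "word_section x (p @ s) = word_section x p @ word_section (x \<noteq> odd (count_list p A)) s"
proof (induction p arbitrary: x)
  case (Cons g p)
  then show ?case by (cases "g = A") (auto intro: arg_cong[where f = "\<lambda>b. word_section b s"])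
qed simp

text \<open>Products in the Klein four-group {1, b, c, d}.\<close>

fun gen_mult :: "gen \<Rightarrow> gen \<Rightarrow> gen list" where
  "gen_mult B B = []" | "gen_mult B C = [D]" | "gen_mult B D = [C]"
| "gen_mult C B = [D]" | "gen_mult C C = []" | "gen_mult C D = [B]"
| "gen_mult D B = [C]" | "gen_mult D C = [B]" | "gen_mult D D = []"
| "gen_mult x y = [x, y]"

lemma gact_A_A [simp]: "gact A (gact A u) = u"
  by (auto simp: fun_eq_iff)

lemma gact_gact_nth:
  "x \<noteq> A \<Longrightarrow> y \<noteq> A \<Longrightarrow> gact y (gact x u) n = word_act u (gen_mult x y) n"
proof (induction n arbitrary: x y u)
  case 0
  then show ?case
    by (cases x; cases y) auto
next
  case (Suc n)
  have "gact y (gact x (prepend (u 0) (u \<circ> Suc))) (Suc n)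
      = word_act (prepend (u 0) (u \<circ> Suc)) (gen_mult x y) (Suc n)"
    using Suc by (cases "u 0"; cases x; cases y; simp add: gact_prepend word_act_prepend comp_def)
  then show ?case by (simp only: prepend_head_tail)
qed

lemma gact_gact: "x \<noteq> A \<Longrightarrow> y \<noteq> A \<Longrightarrow> gact y (gact x u) = word_act u (gen_mult x y)"
  using gact_gact_nth by blast

lemma gact_C_C [simp]: "gact C (gact C u) = u"
  and gact_C_D [simp]: "gact D (gact C u) = gact B u"
  using gact_gact[of C C u] gact_gact[of C D u] by simp_all

lemma rho_eq_prepend: "rho = prepend True rho"
  by (auto simp: rho_def prepend_def fun_eq_iff split: nat.split)

lemma gact_rho_nth: "g \<noteq> A \<Longrightarrow> gact g rho n"
proof (induction n arbitrary: g)
  case 0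
  then show ?case by (subst rho_eq_prepend) (simp add: gact_prepend)
next
  case (Suc n)
  then show ?case by (subst rho_eq_prepend) (cases g; simp add: gact_prepend)
qed

lemma gact_rho: "g \<noteq> A \<Longrightarrow> gact g rho = rho"
  using gact_rho_nth by (auto simp: fun_eq_iff rho_def)

definition suffix_points :: "gen list \<Rightarrow> (nat \<Rightarrow> bool) set" where
  "suffix_points w = {word_act rho (drop i w) | i. i \<le> length w}"

lemma delta_eq_card: "delta w = card (suffix_points w)"
  by (simp add: delta_def suffix_points_def)

lemma finite_suffix_points [simp]: "finite (suffix_points w)"
proof -
  have "suffix_points w = (\<lambda>i. word_act rho (drop i w)) ` {..length w}"
    by (auto simp: suffix_points_def)
  then show ?thesis by simp
qed

lemma mem_suffix_points_iff: "q \<in> suffix_points w \<longleftrightarrow> (\<exists>p s. w = p @ s \<and> q = word_act rho s)"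
proof
  assume "q \<in> suffix_points w"
  then show "\<exists>p s. w = p @ s \<and> q = word_act rho s"
    by (auto simp: suffix_points_def intro: append_take_drop_id[symmetric])
next
  assume "\<exists>p s. w = p @ s \<and> q = word_act rho s"
  then obtain p s where "w = p @ s" "q = word_act rho s" by blast
  then show "q \<in> suffix_points w"
    unfolding suffix_points_def by (auto intro!: exI[of _ "length p"])
qed

lemma word_act_suffix_in_suffix_points: "word_act rho s \<in> suffix_points (p @ s)"
  by (auto simp: mem_suffix_points_iff)

lemma rho_in_suffix_points: "rho \<in> suffix_points w"
  using word_act_suffix_in_suffix_points[of "[]" w] by simp

lemma delta_pos: "0 < delta w"
  using rho_in_suffix_points[of w] by (auto simp: delta_eq_card card_gt_0_iff)

lemma suffix_points_mono: "suffix_points s \<subseteq> suffix_points (p @ s)"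
  by (auto simp: mem_suffix_points_iff) (metis append.assoc)

lemma delta_le_delta_append: "delta s \<le> delta (p @ s)"
  unfolding delta_eq_card by (intro card_mono suffix_points_mono) simp

lemma suffix_points_Nil: "suffix_points [] = {rho}"
  by (simp add: suffix_points_def)

lemma suffix_points_Cons: "suffix_points (g # s) = insert (word_act rho (g # s)) (suffix_points s)"
proof
  show "suffix_points (g # s) \<subseteq> insert (word_act rho (g # s)) (suffix_points s)"
  proof
    fix q
    assume "q \<in> suffix_points (g # s)"
    then obtain p t where "g # s = p @ t" "q = word_act rho t"
      by (auto simp: mem_suffix_points_iff)
    then show "q \<in> insert (word_act rho (g # s)) (suffix_points s)"
      by (cases p) (auto simp: word_act_suffix_in_suffix_points)
  qed
  show "insert (word_act rho (g # s)) (suffix_points s) \<subseteq> suffix_points (g # s)"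
    using word_act_suffix_in_suffix_points[of "g # s" "[]"] suffix_points_mono[of s "[g]"] by simp
qed

lemma delta_le_Suc_count: "delta w \<le> Suc (count_list w A)"
proof (induction w)
  case Nil
  then show ?case by (simp add: delta_eq_card suffix_points_Nil)
next
  case (Cons g s)
  show ?case
  proof (cases "g = A")
    case True
    have "delta (g # s) \<le> Suc (delta s)"
      by (simp add: delta_eq_card suffix_points_Cons card_insert_if)
    with Cons True show ?thesis by simp
  next
    case False
    then have "word_act rho (g # s) \<in> suffix_points s"
      using word_act_suffix_in_suffix_points[of s "[]"] by (simp add: gact_rho)
    with Cons False show ?thesis
      by (simp add: delta_eq_card suffix_points_Cons insert_absorb)
  qed
qed

lemma suffix_points_merge:
  assumes "x \<noteq> A" "y \<noteq> A"
  shows "suffix_points (p @ x # y # s) \<subseteq> suffix_points (p @ gen_mult x y @ s)"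
proof
  fix q
  assume "q \<in> suffix_points (p @ x # y # s)"
  then obtain p' t where eq: "p @ x # y # s = p' @ t" and q: "q = word_act rho t"
    by (auto simp: mem_suffix_points_iff)
  from eq obtain us where "p = p' @ us \<and> t = us @ x # y # s \<or> p @ us = p' \<and> x # y # s = us @ t"
    by (auto simp: append_eq_append_conv2)
  then show "q \<in> suffix_points (p @ gen_mult x y @ s)"
  proof
    assume "p = p' @ us \<and> t = us @ x # y # s"
    then have "q = word_act rho (us @ gen_mult x y @ s)" "p @ gen_mult x y @ s = p' @ us @ gen_mult x y @ s"
      using q gact_gact[OF assms] by simp_all
    then show ?thesis by (metis word_act_suffix_in_suffix_points)
  next
    assume "p @ us = p' \<and> x # y # s = us @ t"
    then consider "t = x # y # s" | "t = y # s" | s' where "s = s' @ t"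
      by (auto simp: Cons_eq_append_conv)
    then show ?thesis
    proof cases
      case 1
      with q have "q = word_act rho (gen_mult x y @ s)"
        using gact_gact[OF assms] by simp
      then show ?thesis by (metis word_act_suffix_in_suffix_points)
    next
      case 2
      with q have "q = word_act rho s"
        using gact_rho[OF assms(2)] by simp
      then show ?thesis by (metis word_act_suffix_in_suffix_points append.assoc)
    next
      case 3
      with q show ?thesis by (metis word_act_suffix_in_suffix_points append.assoc)
    qed
  qed
qed

lemma delta_le_delta_merge:
  "x \<noteq> A \<Longrightarrow> y \<noteq> A \<Longrightarrow> delta (p @ x # y # s) \<le> delta (p @ gen_mult x y @ s)"
  unfolding delta_eq_card by (intro card_mono suffix_points_merge) simp_all

lemma suffix_points_subset_sections:
  "suffix_points w \<subseteq> (\<Union>x. prepend (x \<noteq> odd (count_list w A)) ` suffix_points (word_section x w))"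
proof
  fix q
  assume "q \<in> suffix_points w"
  then obtain p s where w: "w = p @ s" and q: "q = word_act rho s"
    by (auto simp: mem_suffix_points_iff)
  define x where "x = even (count_list p A)"
  have "q = prepend (x \<noteq> odd (count_list w A)) (word_act rho (word_section True s))"
    using q w word_act_prepend[of True rho s] rho_eq_prepend by (auto simp: x_def)
  moreover have "word_act rho (word_section True s) \<in> suffix_points (word_section x w)"
    using w word_section_append[of x p s] word_act_suffix_in_suffix_points by (simp add: x_def)
  ultimately show "q \<in> (\<Union>x. prepend (x \<noteq> odd (count_list w A)) ` suffix_points (word_section x w))"
    by blast
qed

lemma delta_le_sections: "delta w \<le> delta (word_section True w) + delta (word_section False w)"
proof -
  let ?P = "\<lambda>x. prepend (x \<noteq> odd (count_list w A)) ` suffix_points (word_section x w)"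
  have "delta w \<le> card (\<Union>x. ?P x)"
    unfolding delta_eq_card by (intro card_mono suffix_points_subset_sections) simp
  also have "\<dots> \<le> (\<Sum>x\<in>UNIV. card (?P x))"
    by (rule card_UN_le) simp
  also have "\<dots> \<le> (\<Sum>x\<in>UNIV. delta (word_section x w))"
    unfolding delta_eq_card by (intro sum_mono card_image_le) simp
  finally show ?thesis by (simp add: UNIV_bool add.commute)
qed

fun alternating :: "gen list \<Rightarrow> bool" where
  "alternating (x # y # s) \<longleftrightarrow> (x = A \<or> y = A) \<and> alternating (y # s)"
| "alternating _ \<longleftrightarrow> True"

lemma alternating_ConsD: "alternating (g # s) \<Longrightarrow> alternating s"
  by (cases s) auto

lemma not_alternating_split:
  "\<not> alternating w \<Longrightarrow> \<exists>p x y s. w = p @ x # y # s \<and> x \<noteq> A \<and> y \<noteq> A"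
proof (induction w rule: alternating.induct)
  case (1 x y s)
  show ?case
  proof (cases "x = A \<or> y = A")
    case True
    with 1 obtain p x' y' s' where "y # s = p @ x' # y' # s'" "x' \<noteq> A" "y' \<noteq> A"
      by auto
    then show ?thesis by (metis append_Cons)
  next
    case False
    then show ?thesis by (metis append_Nil)
  qed
qed simp_all

lemma length_gen_mult: "x \<noteq> A \<Longrightarrow> y \<noteq> A \<Longrightarrow> length (gen_mult x y) \<le> 1"
  by (cases x; cases y) auto

fun lift_gen :: "gen \<Rightarrow> gen list" where
  "lift_gen A = []"
| "lift_gen B = [B, D, C]"
| "lift_gen C = [B, B]"
| "lift_gen D = [C, C]"

definition interleave_A :: "gen list \<Rightarrow> gen list" where
  "interleave_A l = concat (map (\<lambda>y. [A, y]) l)"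

lemma interleave_A_Nil [simp]: "interleave_A [] = []"
  and interleave_A_Cons [simp]: "interleave_A (y # l) = A # y # interleave_A l"
  and interleave_A_append [simp]: "interleave_A (l @ l') = interleave_A l @ interleave_A l'"
  by (simp_all add: interleave_A_def)

definition a_word :: "gen list \<Rightarrow> gen list" where
  "a_word l = interleave_A l @ [A]"

lemma a_word_Cons: "a_word (y # l) = A # y # a_word l"
  by (simp add: a_word_def)

lemma length_a_word: "length (a_word l) = 2 * length l + 1"
  by (induction l) (simp_all add: a_word_def)

definition lifted_word :: "gen list \<Rightarrow> gen list" where
  "lifted_word l = interleave_A (concat (map lift_gen l)) @ [A, B, A]"

lemma lifted_word_Cons: "lifted_word (y # l) = interleave_A (lift_gen y) @ lifted_word l"
  by (simp add: lifted_word_def)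

lemma sections_lifted_word:
  "(\<forall>u. word_act u (word_section True (lifted_word l)) =
      (if odd (count_list l B) then gact C (word_act u (a_word l)) else word_act u (a_word l)))
   \<and> (\<forall>u. word_act u (A # word_section False (lifted_word l)) =
      (if odd (count_list l B) then word_act u (a_word l) else gact C (word_act u (a_word l))))
   \<and> odd (count_list (lifted_word l) A) = odd (count_list l B)"
proof (induction l)
  case Nil
  then show ?case by (simp add: lifted_word_def a_word_def)
next
  case (Cons y l)
  then show ?case
    unfolding lifted_word_Cons a_word_Cons by (cases y) (simp_all add: word_section_append)
qed

lemma word_act_rho_lifted_word:
  "word_act rho (lifted_word l) =
     (if odd (count_list l B) then prepend False (gact C (word_act rho (a_word l)))
      else prepend True (word_act rho (a_word l)))"
  using sections_lifted_word[of l] word_act_prepend[of True rho "lifted_word l"]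
  by (simp flip: rho_eq_prepend)

lemma word_act_rho_A_lifted_word:
  assumes "x = B \<or> x = C"
  shows "word_act rho (A # x # lifted_word l) =
     (if odd (count_list l B) then prepend True (word_act rho (a_word l))
      else prepend False (gact C (word_act rho (a_word l))))"
  using assms sections_lifted_word[of l] word_act_prepend[of True rho "A # x # lifted_word l"]
  by (auto simp flip: rho_eq_prepend)

lemma suffix_points_a_word:
  "set l \<subseteq> {B, C, D} \<Longrightarrow>
     suffix_points (a_word l) \<subseteq> insert rho ((\<lambda>i. word_act rho (a_word (drop i l))) ` {..length l})"
proof (induction l)
  case Nil
  then show ?case by (auto simp: a_word_def suffix_points_Cons suffix_points_Nil)
next
  case (Cons y l)
  let ?f = "\<lambda>i. word_act rho (a_word (drop i (y # l)))"
  have "word_act rho (y # a_word l) = ?f 1"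
    using Cons.prems by (auto simp: gact_rho)
  moreover have "?f ` {..length (y # l)} = insert (?f 0) ((\<lambda>i. word_act rho (a_word (drop i l))) ` {..length l})"
    by (simp add: atMost_Suc_eq_insert_0 image_image)
  moreover have "?f 1 \<in> ?f ` {..length (y # l)}"
    by (intro imageI) simp
  ultimately show ?case
    using Cons by (auto simp: a_word_Cons suffix_points_Cons)
qed

lemma last_lift_in_B_C: "last (B # concat (map lift_gen l)) \<in> {B, C}"
proof (induction l rule: rev_induct)
  case (snoc y l)
  then show ?case by (cases y) simp_all
qed simp

definition double_step :: "gen list \<Rightarrow> gen list" where
  "double_step l = B # concat (map lift_gen l) @ [B]"

lemma a_word_double_step_split:
  "\<exists>p x. (x = B \<or> x = C) \<and> a_word (double_step l) = p @ A # x # lifted_word (drop i l)"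
proof -
  let ?p = "B # concat (map lift_gen (take i l))"
  have "double_step l = ?p @ concat (map lift_gen (drop i l)) @ [B]"
    unfolding double_step_def by (metis append_Cons append_take_drop_id concat_append map_append append.assoc)
  also have "?p = butlast ?p @ [last ?p]"
    by simp
  finally have "a_word (double_step l) = interleave_A (butlast ?p) @ A # last ?p # lifted_word (drop i l)"
    by (simp add: a_word_def lifted_word_def)
  then show ?thesis
    using last_lift_in_B_C[of "take i l"] by blast
qed

lemma suffix_points_double_step:
  assumes "set l \<subseteq> {B, C, D}" and "q \<in> suffix_points (a_word l)"
  shows "prepend True q \<in> suffix_points (a_word (double_step l))"
    and "prepend False (gact C q) \<in> suffix_points (a_word (double_step l))"
proof -
  let ?W = "a_word (double_step l)"
  have "q = rho \<or> (\<exists>i. q = word_act rho (a_word (drop i l)))"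
    using suffix_points_a_word[OF assms(1)] assms(2) by auto
  then have "prepend True q \<in> suffix_points ?W \<and> prepend False (gact C q) \<in> suffix_points ?W"
  proof
    assume "q = rho"
    moreover have "gact A rho = prepend False rho"
      by (subst rho_eq_prepend) (simp add: gact_prepend)
    moreover have "word_act rho [A] \<in> suffix_points ?W"
      using word_act_suffix_in_suffix_points[of "[A]"] by (simp add: a_word_def)
    ultimately show ?thesis
      using rho_in_suffix_points gact_rho[of C] by (simp flip: rho_eq_prepend)
  next
    assume "\<exists>i. q = word_act rho (a_word (drop i l))"
    then obtain i where q: "q = word_act rho (a_word (drop i l))" by blast
    obtain p x where x: "x = B \<or> x = C" and W: "?W = p @ A # x # lifted_word (drop i l)"
      using a_word_double_step_split by blast
    have "word_act rho (A # x # lifted_word (drop i l)) \<in> suffix_points ?W"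
      "word_act rho (lifted_word (drop i l)) \<in> suffix_points ?W"
      using W word_act_suffix_in_suffix_points by (metis, metis append.assoc append_Cons append_Nil)
    with q x show ?thesis
      using word_act_rho_lifted_word word_act_rho_A_lifted_word
      by (cases "odd (count_list (drop i l) B)") auto
  qed
  then show "prepend True q \<in> suffix_points ?W" "prepend False (gact C q) \<in> suffix_points ?W"
    by simp_all
qed

lemma delta_double_step:
  assumes "set l \<subseteq> {B, C, D}"
  shows "2 * delta (a_word l) \<le> delta (a_word (double_step l))"
proof -
  let ?P = "suffix_points (a_word l)"
  let ?g = "\<lambda>q. prepend False (gact C q)"
  have "prepend True ` ?P \<union> ?g ` ?P \<subseteq> suffix_points (a_word (double_step l))"
    using suffix_points_double_step[OF assms] by blast
  moreover have "card (prepend True ` ?P \<union> ?g ` ?P) = card ?P + card ?P"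
  proof -
    have "inj_on (prepend True) ?P"
      by (simp add: inj_on_def)
    moreover have "inj_on ?g ?P"
      by (rule inj_onI) (metis gact_C_C prepend_eq_iff)
    moreover have "prepend True ` ?P \<inter> ?g ` ?P = {}"
      by auto
    ultimately show ?thesis
      by (simp add: card_Un_disjoint card_image)
  qed
  ultimately have "card ?P + card ?P \<le> card (suffix_points (a_word (double_step l)))"
    by (metis card_mono finite_suffix_points)
  then show ?thesis
    by (simp add: delta_eq_card)
qed

fun doubling_word :: "nat \<Rightarrow> gen list" where
  "doubling_word 0 = []"
| "doubling_word (Suc k) = double_step (doubling_word k)"

lemma set_doubling_word: "set (doubling_word k) \<subseteq> {B, C, D}"
proof -
  have "set (lift_gen g) \<subseteq> {B, C, D}" for g
    by (cases g) auto
  then show ?thesis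
    by (induction k) (auto simp: double_step_def)
qed

lemma delta_doubling_word: "2^k \<le> delta (a_word (doubling_word k))"
proof (induction k)
  case 0
  show ?case using delta_pos[of "a_word (doubling_word 0)"] by simp
next
  case (Suc k)
  then show ?case using delta_double_step[OF set_doubling_word[of k]] by simp
qed

lemma exists_power_bracket:
  fixes L y :: real
  assumes "1 < L" "1 \<le> y"
  shows "\<exists>k. L^k \<le> y \<and> y < L^(Suc k)"
proof -
  define n where "n = (LEAST n. y < L^n)"
  obtain m where "y < L^m"
    using real_arch_pow[OF assms(1)] by blast
  then have n: "y < L^n"
    unfolding n_def by (rule LeastI)
  then obtain k where k: "n = Suc k"
    using assms(2) by (cases n) auto
  then have "\<not> y < L^k"
    using not_less_Least[of k "\<lambda>n. y < L^n"] by (simp add: n_def)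
  with n k show ?thesis
    by (auto intro!: exI[of _ k])
qed

locale eta_root =
  fixes \<eta> :: real
  assumes eta_root: "\<eta>^3 + \<eta>^2 + \<eta> - 2 = 0"
begin

lemma eta_pos: "0 < \<eta>"
proof (rule ccontr)
  assume "\<not> 0 < \<eta>"
  moreover have "0 \<le> \<eta>^2 + \<eta> + 1"
    using zero_le_power2[of "\<eta> + 1/2"] by (simp add: power2_eq_square algebra_simps)
  ultimately have "\<eta> * (\<eta>^2 + \<eta> + 1) \<le> 0"
    by (simp add: mult_nonpos_nonneg)
  then show False
    using eta_root by (simp add: power3_eq_cube power2_eq_square algebra_simps)
qed

lemma eta_less_one: "\<eta> < 1"
proof (rule ccontr)
  assume "\<not> \<eta> < 1"
  then have "1 \<le> \<eta>" "1 \<le> \<eta>^2" "1 \<le> \<eta>^3" by (simp_all add: one_le_power)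
  then show False using eta_root by linarith
qed

definition kappa :: real where
  "kappa = 1 / (1 - \<eta>^3)"

lemma kappa_pos: "0 < kappa"
  and kappa_mult: "kappa * (1 - \<eta>^3) = 1"
proof -
  have "\<eta>^3 < 1"
    using eta_pos eta_less_one by (simp add: power_less_one_iff)
  then show "0 < kappa" "kappa * (1 - \<eta>^3) = 1"
    by (simp_all add: kappa_def)
qed

text \<open>The weights are chosen so that the two sections of g A, for g \<noteq> A, weigh \<eta> times as
  much as g A itself.\<close>

fun weight :: "gen \<Rightarrow> real" where
  "weight A = 1"
| "weight B = \<eta>^3 * kappa"
| "weight C = (1 - \<eta>^2) * kappa"
| "weight D = (1 - \<eta>) * kappa"

lemma weight_nonneg: "0 \<le> weight g"
proof -
  have "\<eta>^2 \<le> 1" "\<eta>^3 \<ge> 0"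
    using eta_pos eta_less_one by (simp_all add: power_le_one)
  then show ?thesis
    using eta_less_one kappa_pos by (cases g) simp_all
qed

definition wnorm :: "gen list \<Rightarrow> real" where
  "wnorm w = (\<Sum>g\<leftarrow>w. weight g)"

lemma wnorm_Nil [simp]: "wnorm [] = 0"
  and wnorm_Cons [simp]: "wnorm (g # s) = weight g + wnorm s"
  and wnorm_append [simp]: "wnorm (s @ t) = wnorm s + wnorm t"
  by (simp_all add: wnorm_def)

lemma wnorm_gen_sections:
  assumes "g \<noteq> A"
  shows "wnorm (gen_section g True) + wnorm (gen_section g False) = \<eta> * (weight g + 1)"
proof -
  have "1 - \<eta>^3 \<noteq> 0"
    using kappa_mult by auto
  then have "(1 - \<eta>^2) * kappa + 1 = \<eta> * (\<eta>^3 * kappa + 1)"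
    "1 + (1 - \<eta>) * kappa = \<eta> * ((1 - \<eta>^2) * kappa + 1)"
    "\<eta>^3 * kappa = \<eta> * ((1 - \<eta>) * kappa + 1)"
    using eta_root unfolding kappa_def by (simp_all add: field_simps; algebra)+
  then show ?thesis
    using assms by (cases g) simp_all
qed

lemma weight_B_eq: "weight B = weight C + weight D"
proof -
  have "weight C + weight D = ((1 - \<eta>^2) + (1 - \<eta>)) * kappa"
    by (simp add: algebra_simps)
  also have "(1 - \<eta>^2) + (1 - \<eta>) = \<eta>^3"
    using eta_root by simp
  finally show ?thesis
    by simp
qed

lemma wnorm_gen_mult:
  assumes "x \<noteq> A" "y \<noteq> A"
  shows "wnorm (gen_mult x y) \<le> weight x + weight y"
proof -
  have "\<eta>^2 \<le> \<eta>" "0 \<le> \<eta>^3"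
    using eta_pos eta_less_one by (simp_all add: power2_eq_square)
  then have "1 - \<eta> \<le> \<eta>^3 + (1 - \<eta>^2)" "1 - \<eta>^2 \<le> \<eta>^3 + (1 - \<eta>)"
    using eta_less_one eta_root by (simp_all add: algebra_simps)
  then have "weight D \<le> weight B + weight C" "weight C \<le> weight B + weight D"
    using kappa_pos by (simp_all add: mult_right_mono flip: distrib_right)
  then show ?thesis
    using assms weight_B_eq weight_nonneg[of B] weight_nonneg[of C] weight_nonneg[of D]
    by (cases x; cases y) (simp_all del: weight.simps)
qed

lemma count_le_wnorm: "real (count_list w A) \<le> wnorm w"
  by (induction w) (auto simp: weight_nonneg add_increasing)

text \<open>The extra 1 pays for a leading letter other than A, which is not preceded by an A.\<close>

lemma alternating_sections_wnorm_le:
  "alternating w \<Longrightarrow> wnorm (word_section True w) + wnorm (word_section False w)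
     \<le> \<eta> * (wnorm w + (if w \<noteq> [] \<and> hd w \<noteq> A then 1 else 0))"
proof (induction w)
  case Nil
  then show ?case by simp
next
  case (Cons g s)
  then have IH: "wnorm (word_section True s) + wnorm (word_section False s)
      \<le> \<eta> * (wnorm s + (if s \<noteq> [] \<and> hd s \<noteq> A then 1 else 0))"
    using alternating_ConsD by blast
  show ?case
  proof (cases "g = A")
    case True
    have "\<eta> * (wnorm s + (if s \<noteq> [] \<and> hd s \<noteq> A then 1 else 0)) \<le> \<eta> * (wnorm s + 1)"
      using eta_pos by (intro mult_left_mono) auto
    with IH True show ?thesis by (simp add: add.commute)
  next
    case False
    with Cons.prems have "s = [] \<or> hd s = A"
      by (cases s) auto
    with IH have "wnorm (word_section True s) + wnorm (word_section False s) \<le> \<eta> * wnorm s"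
      by auto
    with False wnorm_gen_sections[OF False] show ?thesis
      by (simp add: algebra_simps)
  qed
qed

lemma exists_alternating_reduct:
  "\<exists>w'. alternating w' \<and> delta w \<le> delta w' \<and> wnorm w' \<le> wnorm w"
proof (induction w rule: length_induct)
  case (1 w)
  show ?case
  proof (cases "alternating w")
    case False
    then obtain p x y s where w: "w = p @ x # y # s" and xy: "x \<noteq> A" "y \<noteq> A"
      using not_alternating_split by blast
    define v where "v = p @ gen_mult x y @ s"
    have "length v < length w"
      using length_gen_mult[OF xy] by (simp add: w v_def)
    with 1 obtain w' where "alternating w'" "delta v \<le> delta w'" "wnorm w' \<le> wnorm v"
      by blast
    moreover have "delta w \<le> delta v" "wnorm v \<le> wnorm w"
      using delta_le_delta_merge[OF xy] wnorm_gen_mult[OF xy] by (simp_all add: w v_def)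
    ultimately show ?thesis by force
  qed blast
qed

lemma delta_le_level: "real (delta w) \<le> 2^(k+1) - 1 + \<eta>^k * wnorm w"
proof (induction k arbitrary: w)
  case 0
  show ?case
    using delta_le_Suc_count[of w] count_le_wnorm[of w] by simp
next
  case (Suc k)
  obtain w' where w': "alternating w'" "delta w \<le> delta w'" "wnorm w' \<le> wnorm w"
    using exists_alternating_reduct by blast
  have sections: "wnorm (word_section True w') + wnorm (word_section False w') \<le> \<eta> * (wnorm w' + 1)"
    by (rule order_trans[OF alternating_sections_wnorm_le[OF w'(1)]])
      (use eta_pos in \<open>auto intro: mult_left_mono\<close>)
  have "real (delta w) \<le> real (delta (word_section True w')) + real (delta (word_section False w'))"
    using w'(2) delta_le_sections[of w'] by linarith
  also have "\<dots> \<le> 2^(k+2) - 2 + \<eta>^k * (wnorm (word_section True w') + wnorm (word_section False w'))"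
    using Suc.IH[of "word_section True w'"] Suc.IH[of "word_section False w'"]
    by (simp add: algebra_simps)
  also have "\<dots> \<le> 2^(k+2) - 2 + \<eta>^(Suc k) * (wnorm w' + 1)"
    using mult_left_mono[OF sections, of "\<eta>^k"] eta_pos by simp
  also have "\<dots> \<le> 2^(Suc k + 1) - 1 + \<eta>^(Suc k) * wnorm w"
  proof -
    have "\<eta>^(Suc k) * wnorm w' \<le> \<eta>^(Suc k) * wnorm w"
      using eta_pos by (intro mult_left_mono w'(3)) simp
    moreover have "\<eta>^(Suc k) \<le> 1"
      using eta_pos eta_less_one by (intro power_le_one) simp_all
    ultimately show ?thesis by (simp add: distrib_left)
  qed
  finally show ?case .
qed

text \<open>Substitution by lift_gen multiplies this weight by 1 + \<eta> + \<eta>^2 = 2 / \<eta>.\<close>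

fun length_weight :: "gen \<Rightarrow> real" where
  "length_weight A = 0"
| "length_weight B = 1"
| "length_weight C = \<eta>"
| "length_weight D = \<eta>^2"

definition lnorm :: "gen list \<Rightarrow> real" where
  "lnorm l = (\<Sum>g\<leftarrow>l. length_weight g)"

lemma lnorm_Nil [simp]: "lnorm [] = 0"
  and lnorm_Cons [simp]: "lnorm (g # l) = length_weight g + lnorm l"
  and lnorm_append [simp]: "lnorm (l @ l') = lnorm l + lnorm l'"
  by (simp_all add: lnorm_def)

lemma lnorm_lift_gen: "lnorm (lift_gen g) = 2 / \<eta> * length_weight g"
proof -
  have "1 + \<eta>^2 + \<eta> = 2 / \<eta>"
    using eta_root eta_pos by (simp add: field_simps power2_eq_square power3_eq_cube)
  then show ?thesis
    using eta_pos by (cases g) (simp_all add: field_simps power2_eq_square)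
qed

lemma lnorm_concat_lift_gen: "lnorm (concat (map lift_gen l)) = 2 / \<eta> * lnorm l"
  by (induction l) (simp_all add: lnorm_lift_gen algebra_simps)

lemma lnorm_doubling_word: "lnorm (doubling_word k) \<le> 2 * (2 / \<eta>)^k - 2"
proof (induction k)
  case (Suc k)
  have "2 \<le> 2 / \<eta>"
    using eta_pos eta_less_one by (simp add: field_simps)
  moreover have "lnorm (doubling_word (Suc k)) = 2 / \<eta> * lnorm (doubling_word k) + 2"
    by (simp add: double_step_def lnorm_concat_lift_gen)
  ultimately show ?case
    using mult_left_mono[OF Suc.IH, of "2 / \<eta>"] eta_pos by (simp add: algebra_simps)
qed simp

lemma length_le_lnorm: "set l \<subseteq> {B, C, D} \<Longrightarrow> \<eta>^2 * real (length l) \<le> lnorm l"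
proof (induction l)
  case (Cons g l)
  have "\<eta>^2 \<le> \<eta>"
    using eta_pos eta_less_one by (simp add: power2_eq_square)
  with Cons eta_less_one have "\<eta>^2 \<le> length_weight g"
    by (cases g) auto
  with Cons show ?case
    by (simp add: algebra_simps)
qed simp

lemma length_a_word_doubling_word:
  "real (length (a_word (doubling_word k))) \<le> (4 / \<eta>^2 + 1) * (2 / \<eta>)^k"
proof -
  have "\<eta>^2 * real (length (doubling_word k)) \<le> 2 * (2 / \<eta>)^k"
    using length_le_lnorm[OF set_doubling_word[of k]] lnorm_doubling_word[of k] by linarith
  then have "real (length (doubling_word k)) \<le> 2 * (2 / \<eta>)^k / \<eta>^2"
    using eta_pos by (simp add: field_simps)
  moreover have "1 \<le> (2 / \<eta>)^k"
    using eta_pos eta_less_one by (intro one_le_power) (simp add: field_simps)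
  ultimately show ?thesis
    by (simp add: length_a_word algebra_simps)
qed

lemma wnorm_le_length: "wnorm w \<le> (1 + weight B) * real (length w)"
proof (induction w)
  case (Cons g w)
  have "weight g \<le> 1 + weight B"
    using weight_B_eq weight_nonneg[of C] weight_nonneg[of D]
    by (cases g) (simp_all del: weight.simps add: weight.simps(1))
  with Cons show ?case
    by (simp add: algebra_simps)
qed simp

definition alpha :: real where
  "alpha = ln 2 / ln (2 / \<eta>)"

lemma two_div_eta_gt_one: "1 < 2 / \<eta>"
  using eta_pos eta_less_one by (simp add: field_simps)

lemma alpha_pos: "0 < alpha"
  unfolding alpha_def using ln_gt_zero[OF two_div_eta_gt_one] by (intro divide_pos_pos) simp_all

lemma power_powr_alpha: "((2 / \<eta>)^k) powr alpha = 2^k"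
proof -
  have "(2 / \<eta>)^k = (2 / \<eta>) powr real k"
    using eta_pos by (simp add: powr_realpow)
  then have "((2 / \<eta>)^k) powr alpha = ((2 / \<eta>) powr alpha) powr real k"
    by (simp add: powr_powr_swap)
  also have "(2 / \<eta>) powr alpha = 2"
    using ln_gt_zero[OF two_div_eta_gt_one] eta_pos by (simp add: powr_def alpha_def)
  finally show ?thesis
    by (simp add: powr_realpow)
qed

lemma delta_le_power:
  assumes "real (length w) < (2 / \<eta>)^(Suc k)"
  shows "real (delta w) \<le> (2 + (1 + weight B) * (2 / \<eta>)) * 2^k"
proof -
  have "0 \<le> 1 + weight B"
    using weight_nonneg[of B] by simp
  then have "\<eta>^k * wnorm w \<le> \<eta>^k * ((1 + weight B) * (2 / \<eta>)^(Suc k))"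
    using order_trans[OF wnorm_le_length mult_left_mono[OF less_imp_le[OF assms]]] eta_pos
    by (intro mult_left_mono) simp_all
  also have "\<dots> = (1 + weight B) * (2 / \<eta>) * (\<eta>^k * (2 / \<eta>)^k)"
    by (simp only: power_Suc ac_simps)
  also have "\<eta>^k * (2 / \<eta>)^k = 2^k"
    using eta_pos by (simp flip: power_mult_distrib)
  finally show ?thesis
    using delta_le_level[of w k] by (simp add: algebra_simps)
qed

lemma delta_upper_bound:
  "\<exists>C1>0. \<forall>w. w \<noteq> [] \<longrightarrow> real (delta w) \<le> C1 * real (length w) powr alpha"
proof (intro exI conjI allI impI)
  let ?C1 = "2 + (1 + weight B) * (2 / \<eta>)"
  show "0 < ?C1"
    using weight_nonneg[of B] eta_pos by (simp add: add_pos_nonneg)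
  fix w :: "gen list"
  assume "w \<noteq> []"
  then have "1 \<le> real (length w)"
    by (cases w) simp_all
  then obtain k where k: "(2 / \<eta>)^k \<le> real (length w)" "real (length w) < (2 / \<eta>)^(Suc k)"
    using exists_power_bracket[OF two_div_eta_gt_one] by blast
  have "real (delta w) \<le> ?C1 * 2^k"
    by (rule delta_le_power[OF k(2)])
  also have "(2::real)^k \<le> real (length w) powr alpha"
    using powr_mono2[OF less_imp_le[OF alpha_pos] _ k(1)] power_powr_alpha eta_pos by simp
  finally show "real (delta w) \<le> ?C1 * real (length w) powr alpha"
    using \<open>0 < ?C1\<close> by simp
qed

lemma exists_word_delta_ge:
  assumes "(4 / \<eta>^2 + 1) * (2 / \<eta>)^k \<le> real l"
  shows "\<exists>w. length w = l \<and> 2^k \<le> delta w"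
proof -
  let ?v = "a_word (doubling_word k)"
  have "length ?v \<le> l"
    using length_a_word_doubling_word[of k] assms by linarith
  then have "length (replicate (l - length ?v) A @ ?v) = l"
    by simp
  moreover have "2^k \<le> delta (replicate (l - length ?v) A @ ?v)"
    using delta_doubling_word[of k] delta_le_delta_append by (rule order_trans)
  ultimately show ?thesis
    by blast
qed

lemma exists_word_powr_le_delta:
  assumes "4 / \<eta>^2 + 1 \<le> real l"
  shows "\<exists>w. length w = l \<and> real l powr alpha \<le> 2 * (4 / \<eta>^2 + 1) powr alpha * real (delta w)"
proof -
  define K where "K = 4 / \<eta>^2 + 1"
  have K: "1 \<le> K"
    by (simp add: K_def)
  have "K \<le> real l"
    using assms by (simp add: K_def)
  then have "1 \<le> real l / K"
    using K by (simp add: le_divide_eq)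
  then obtain k where k: "(2 / \<eta>)^k \<le> real l / K" "real l / K < (2 / \<eta>)^(Suc k)"
    using exists_power_bracket[OF two_div_eta_gt_one] by blast
  have "K * (2 / \<eta>)^k \<le> real l"
    using k(1) K by (simp add: pos_le_divide_eq mult.commute)
  then obtain w where w: "length w = l" "2^k \<le> delta w"
    using exists_word_delta_ge[of k l] unfolding K_def by blast
  have "real l powr alpha \<le> (K * (2 / \<eta>)^(Suc k)) powr alpha"
    using k(2) K alpha_pos by (intro powr_mono2) (simp_all add: field_simps)
  also have "\<dots> = K powr alpha * ((2 / \<eta>)^(Suc k)) powr alpha"
    using K eta_pos by (intro powr_mult)
  also have "\<dots> = 2 * K powr alpha * 2^k"
    unfolding power_powr_alpha by simp
  also have "\<dots> \<le> 2 * K powr alpha * real (delta w)"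
    using w(2) by (intro mult_left_mono) (simp_all flip: of_nat_le_iff)
  finally show ?thesis
    using w(1) unfolding K_def by blast
qed

lemma delta_lower_bound:
  "\<exists>C2>0. \<forall>l>0. \<exists>w. length w = l \<and> C2 * real l powr alpha \<le> real (delta w)"
proof -
  define K where "K = 4 / \<eta>^2 + 1"
  have "1 \<le> K"
    by (simp add: K_def)
  then have K: "0 < K powr alpha"
    by simp
  have "\<exists>w. length w = l \<and> 1 / (2 * K powr alpha) * real l powr alpha \<le> real (delta w)" for l
  proof (cases "real l < K")
    case True
    then have "1 / (2 * K powr alpha) * real l powr alpha \<le> 1 / (2 * K powr alpha) * K powr alpha"
      using K alpha_pos by (intro mult_left_mono powr_mono2) simp_all
    also have "\<dots> \<le> real (delta (replicate l A))"
      using K delta_pos[of "replicate l A"] by simp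
    finally show ?thesis
      by (intro exI[of _ "replicate l A"]) simp
  next
    case False
    then show ?thesis
      using exists_word_powr_le_delta[of l, folded K_def] K by (auto simp: field_simps)
  qed
  moreover have "0 < 1 / (2 * K powr alpha)"
    using K by simp
  ultimately show ?thesis
    by blast
qed

end

theorem corollary4p8:
  fixes \<eta> \<alpha> :: real
  assumes "\<eta>^3 + \<eta>^2 + \<eta> - 2 = 0"
    and "\<alpha> = ln 2 / ln (2 / \<eta>)"
  shows "\<exists>C1 C2 :: real. C1 > 0 \<and> C2 > 0 \<and>
     (\<forall>l::nat. l > 0 \<longrightarrow>
        (\<forall>w. length w = l \<longrightarrow> real (delta w) \<le> C1 * real l powr \<alpha>) \<and>
        (\<exists>w. length w = l \<and> real (delta w) \<ge> C2 * real l powr \<alpha>))"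
proof -
  interpret eta_root \<eta>
    using assms(1) by unfold_locales
  have \<alpha>: "\<alpha> = alpha"
    using assms(2) by (simp add: alpha_def)
  obtain C1 where "C1 > 0" "\<forall>w. w \<noteq> [] \<longrightarrow> real (delta w) \<le> C1 * real (length w) powr \<alpha>"
    using delta_upper_bound unfolding \<alpha> by blast
  moreover obtain C2 where "C2 > 0" "\<forall>l>0. \<exists>w. length w = l \<and> C2 * real l powr \<alpha> \<le> real (delta w)"
    using delta_lower_bound unfolding \<alpha> by blast
  ultimately show ?thesis
    by (metis length_greater_0_conv)
qed

end
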